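(* Let $n\ge 2$ and let $G$ be a graph on $2n+1$ vertices with at least $n^2+n$ edges that contains no two distinct vertices of the same degree joined by a path of length three. Let $\beta$ be the largest integer such that $G$ contains two distinct vertices of degree $\beta$, and let $u,v$ be two distinct vertices with $d(u)=d(v)=\beta$. Let $\mathbf{1}_{uv}=1$ if $uv\in E(G)$ and $\mathbf{1}_{uv}=0$ otherwise, and set $c=\beta-n-\mathbf{1}_{uv}$. If $c\ge 1$, then \[ e(\overline{G})\ge n^2+c^2-c-\mathbf{1}_{uv}, \] where $e(\overline{G})$ is the number of edges of the complement graph $\overline{G}$.
   Context: A path of length three joining vertices $a$ and $b$ is a path $a\,x\,y\,b$ with four distinct vertices and three edges. $\overline{G}$ denotes the complement of $G$. Graphs are finite and simple. *)

theory Defs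
  imports Main
begin

definition simple_graph :: "'a set \<Rightarrow> 'a set set \<Rightarrow> bool" where
  "simple_graph V E \<longleftrightarrow> finite V \<and> (\<forall>e\<in>E. e \<subseteq> V \<and> card e = 2)"

definition degree :: "'a set set \<Rightarrow> 'a \<Rightarrow> nat" where
  "degree E v = card {e \<in> E. v \<in> e}"

definition path3 :: "'a set set \<Rightarrow> 'a \<Rightarrow> 'a \<Rightarrow> bool" where
  "path3 E a b \<longleftrightarrow> (\<exists>x y. distinct [a, x, y, b] \<and>
      {a, x} \<in> E \<and> {x, y} \<in> E \<and> {y, b} \<in> E)"

definition compl_edges :: "'a set \<Rightarrow> 'a set set \<Rightarrow> 'a set set" where
  "compl_edges V E = {e. e \<subseteq> V \<and> card e = 2 \<and> e \<notin> E}"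

end

theory Submission
  imports Defs
begin

(* Write nbrs_u = N(u) - {v}, nbrs_v = N(v) - {u}, common for their intersection and rest for
  the vertices outside {u, v} and both neighbourhoods. A forbidden path u x y v means that there
  are no edges between nbrs_u and nbrs_v, so a vertex of common is adjacent only to u, v and
  vertices of rest. Counting vertices gives card common = card rest + 2c + 1, so two vertices
  x, y of common have the same number of neighbours in rest, hence the same degree; the path
  x u v y then rules out the edge uv. Choosing x, y with the largest such repeated number J,
  their neighbourhoods in rest span no edges between them, which bounds the edges inside rest,
  while the values above J are distinct, which forces many non-edges between common and rest.
  So rest spans at most as many edges as there are non-edges between common and rest, and
  summing all degrees gives e(G) <= n^2 + n - c^2 + c. *)

definition neighbours :: "'a set set \<Rightarrow> 'a \<Rightarrow> 'a set" where
  "neighbours E x = {y. {x, y} \<in> E}"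

lemma neighbours_sym: "y \<in> neighbours E x \<longleftrightarrow> x \<in> neighbours E y"
  by (simp add: neighbours_def insert_commute)

lemma finite_edges: "simple_graph V E \<Longrightarrow> finite E"
  unfolding simple_graph_def by (meson PowI finite_Pow_iff finite_subset subsetI)

context
  fixes V :: "'a set" and E :: "'a set set"
  assumes graph: "simple_graph V E"
begin

lemma neighbours_subset: "neighbours E x \<subseteq> V"
  using graph by (auto simp: simple_graph_def neighbours_def)

lemma finite_neighbours: "finite (neighbours E x)"
  using graph neighbours_subset by (meson finite_subset simple_graph_def)

lemma not_in_neighbours_self: "x \<notin> neighbours E x"
  using graph by (force simp: simple_graph_def neighbours_def)

lemma degree_eq_card_neighbours: "degree E x = card (neighbours E x)"
proof -
  have "bij_betw (\<lambda>y. {x, y}) (neighbours E x) {e \<in> E. x \<in> e}"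
  proof (rule bij_betwI')
    fix e assume e: "e \<in> {e \<in> E. x \<in> e}"
    then obtain a b where "e = {a, b}"
      using graph by (auto simp: simple_graph_def card_2_iff)
    with e show "\<exists>y\<in>neighbours E x. e = {x, y}"
      by (auto simp: neighbours_def insert_commute)
  qed (auto simp: neighbours_def doubleton_eq_iff)
  then show ?thesis
    unfolding degree_def by (simp add: bij_betw_same_card)
qed

lemma sum_degree_eq_twice_card_edges: "(\<Sum>x\<in>V. degree E x) = 2 * card E"
proof -
  have "(\<Sum>x\<in>V. degree E x) = (\<Sum>x\<in>V. \<Sum>e\<in>E. of_bool (x \<in> e))"
    unfolding degree_def using finite_edges[OF graph] by (simp add: Int_def conj_commute)
  also have "\<dots> = (\<Sum>e\<in>E. \<Sum>x\<in>V. of_bool (x \<in> e))"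
    by (rule sum.swap)
  also have "\<dots> = (\<Sum>e\<in>E. card e)"
  proof (rule sum.cong)
    fix e assume "e \<in> E"
    then have "e \<subseteq> V" "finite V"
      using graph by (auto simp: simple_graph_def)
    then show "(\<Sum>x\<in>V. of_bool (x \<in> e)) = card e"
      by (simp add: Int_absorb1)
  qed simp
  also have "\<dots> = 2 * card E"
    using graph by (simp add: simple_graph_def)
  finally show ?thesis .
qed

lemma sum_card_Int_neighbours_swap:
  assumes "finite X" "finite Y"
  shows "(\<Sum>x\<in>X. card (Y \<inter> neighbours E x)) = (\<Sum>y\<in>Y. card (X \<inter> neighbours E y))"
proof -
  have "(\<Sum>x\<in>X. card (Y \<inter> neighbours E x)) = (\<Sum>x\<in>X. \<Sum>y\<in>Y. of_bool (y \<in> neighbours E x))"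
    using assms by simp
  also have "\<dots> = (\<Sum>y\<in>Y. \<Sum>x\<in>X. of_bool (x \<in> neighbours E y))"
    by (subst sum.swap) (simp add: neighbours_sym)
  also have "\<dots> = (\<Sum>y\<in>Y. card (X \<inter> neighbours E y))"
    using assms by simp
  finally show ?thesis .
qed

lemma card_compl_edges: "card (compl_edges V E) + card E = card V choose 2"
proof -
  let ?P = "{e. e \<subseteq> V \<and> card e = 2}"
  have "compl_edges V E = ?P - E" "E \<subseteq> ?P" "finite V"
    using graph by (auto simp: compl_edges_def simple_graph_def)
  moreover have "card E \<le> card ?P"
    using \<open>E \<subseteq> ?P\<close> \<open>finite V\<close> by (intro card_mono) auto
  ultimately show ?thesis
    by (simp add: card_Diff_subset finite_edges[OF graph] n_subsets)
qed

end

lemma card_mult_pred_le_twice_sum: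
  fixes T :: "nat set"
  assumes "finite T"
  shows "card T * (card T - 1) \<le> 2 * \<Sum>T"
  using assms
proof (induction "card T" arbitrary: T)
  case 0
  then show ?case by simp
next
  case (Suc k)
  define M where "M = Max T"
  have "T \<noteq> {}"
    using Suc.hyps(2) by auto
  then have "M \<in> T" and "T \<subseteq> {0..M}"
    using Suc.prems by (auto simp: M_def)
  then have "k \<le> M" and "card (T - {M}) = k" and "\<Sum>T = M + \<Sum>(T - {M})"
    using Suc.hyps(2) Suc.prems card_mono[of "{0..M}" T] by (auto simp: sum.remove)
  have "card T * (card T - 1) = k * (k - 1) + 2 * k"
    using Suc.hyps(2)[symmetric] by (cases k) auto
  also have "\<dots> \<le> 2 * \<Sum>(T - {M}) + 2 * M"
    using Suc.hyps(1) \<open>card (T - {M}) = k\<close> Suc.prems \<open>k \<le> M\<close>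
    by (intro add_mono) fastforce+
  also have "\<dots> = 2 * \<Sum>T"
    using \<open>\<Sum>T = M + \<Sum>(T - {M})\<close> by simp
  finally show ?case .
qed

lemma card_mult_pred_le_twice_sum_inj:
  fixes g :: "'b \<Rightarrow> nat"
  assumes "finite H" "inj_on g H"
  shows "card H * (card H - 1) \<le> 2 * sum g H"
  using card_mult_pred_le_twice_sum[of "g ` H"] assms by (simp add: sum.reindex card_image)

lemma obtain_max_repeated_value:
  fixes s :: "'b \<Rightarrow> nat"
  assumes "finite C" "r + 2 \<le> card C" "\<And>x. x \<in> C \<Longrightarrow> s x \<le> r"
  obtains J x y where "x \<in> C" "y \<in> C" "x \<noteq> y" "s x = J" "s y = J"
    "inj_on s {x \<in> C. J < s x}"
proof -
  define R where "R = {j. \<exists>x\<in>C. \<exists>y\<in>C. x \<noteq> y \<and> s x = j \<and> s y = j}"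
  have "\<not> inj_on s C"
  proof
    assume "inj_on s C"
    moreover have "s ` C \<subseteq> {0..r}"
      using assms(3) by auto
    ultimately have "card C \<le> card {0..r}"
      by (rule card_inj_on_le) simp
    with assms(2) show False by simp
  qed
  then have "R \<noteq> {}"
    unfolding R_def inj_on_def by blast
  moreover have "finite R"
    using assms(3) by (intro finite_subset[of R "{0..r}"]) (auto simp: R_def)
  ultimately have "Max R \<in> R" and le_Max: "\<And>j. j \<in> R \<Longrightarrow> j \<le> Max R"
    by auto
  then obtain x y where "x \<in> C" "y \<in> C" "x \<noteq> y" "s x = Max R" "s y = Max R"
    unfolding R_def by blast
  moreover have "inj_on s {x \<in> C. Max R < s x}"
    using le_Max by (force simp: inj_on_def R_def)
  ultimately show ?thesis
    using that by blast
qed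

lemma repeated_values_gap_sum:
  fixes s :: "'b \<Rightarrow> nat"
  assumes "finite C" "r + 1 \<le> card C" and s_le: "\<And>x. x \<in> C \<Longrightarrow> s x \<le> r"
    and inj: "inj_on s {x \<in> C. J < s x}"
  shows "J * (r - J) + (r - J) * (r - 1) \<le> 2 * (\<Sum>x\<in>C. r - s x)"
proof (cases "J \<le> r")
  case False
  then show ?thesis by simp
next
  case True
  define H where "H = {x \<in> C. J < s x}"
  define L where "L = {x \<in> C. s x \<le> J}"
  have "C = L \<union> H" "L \<inter> H = {}" "finite L" "finite H"
    using \<open>finite C\<close> by (auto simp: H_def L_def)
  then have card_C: "card C = card L + card H"
    and sum_C: "(\<Sum>x\<in>C. r - s x) = (\<Sum>x\<in>L. r - s x) + (\<Sum>x\<in>H. r - s x)"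
    by (simp_all add: card_Un_disjoint sum.union_disjoint)
  \<comment> \<open>On H the gaps r - s x are distinct numbers below r - J, so they sum to at least
    card H * (card H - 1) / 2; on L each gap is at least r - J.\<close>
  have inj_gap: "inj_on (\<lambda>x. r - s x) H"
  proof (rule inj_onI)
    fix x y assume "x \<in> H" "y \<in> H" "r - s x = r - s y"
    moreover have "s x \<le> r" "s y \<le> r"
      using \<open>x \<in> H\<close> \<open>y \<in> H\<close> s_le by (auto simp: H_def)
    ultimately have "s x = s y"
      by linarith
    with \<open>x \<in> H\<close> \<open>y \<in> H\<close> show "x = y"
      using inj unfolding H_def inj_on_def by blast
  qed
  have "(\<lambda>x. r - s x) ` H \<subseteq> {..<r - J}"
  proof
    fix g assume "g \<in> (\<lambda>x. r - s x) ` H"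
    then obtain x where "g = r - s x" "x \<in> C" "J < s x"
      by (auto simp: H_def)
    then show "g \<in> {..<r - J}"
      using s_le[of x] by simp
  qed
  then have "card H \<le> card {..<r - J}"
    by (rule card_inj_on_le[OF inj_gap]) simp
  then obtain d where d: "r - J = card H + d"
    using le_Suc_ex by fastforce
  have sum_L: "(J + d + 1) * (r - J) \<le> (\<Sum>x\<in>L. r - s x)"
  proof -
    have "J + d + 1 \<le> card L"
      using card_C d True \<open>r + 1 \<le> card C\<close> by linarith
    then have "(J + d + 1) * (r - J) \<le> card L * (r - J)"
      by (rule mult_le_mono1)
    also have "\<dots> \<le> (\<Sum>x\<in>L. r - s x)"
      using sum_bounded_below[of L "r - J" "\<lambda>x. r - s x"] by (simp add: L_def diff_le_mono2)
    finally show ?thesis .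
  qed
  have sum_H: "card H * (card H - 1) \<le> 2 * (\<Sum>x\<in>H. r - s x)"
    using card_mult_pred_le_twice_sum_inj[OF \<open>finite H\<close> inj_gap] .
  obtain h where h: "card H = h"
    by simp
  have "r = J + h + d"
    using d h True by linarith
  then have "J * (r - J) + (r - J) * (r - 1) = J * (h + d) + (h + d) * (J + h + d - 1)"
    by simp
  also have "\<dots> \<le> 2 * ((J + d + 1) * (h + d)) + h * (h - 1)"
    by (cases h) (simp_all add: algebra_simps)
  also have "\<dots> \<le> 2 * (\<Sum>x\<in>L. r - s x) + 2 * (\<Sum>x\<in>H. r - s x)"
    using sum_L sum_H d h by (intro add_mono) simp_all
  also have "\<dots> = 2 * (\<Sum>x\<in>C. r - s x)"
    using sum_C by simp
  finally show ?thesis .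
qed

locale equal_degree_pair =
  fixes V :: "'a set" and E :: "'a set set" and u v :: 'a
  assumes graph: "simple_graph V E"
    and no_path3:
      "\<And>a b. \<lbrakk>a \<in> V; b \<in> V; a \<noteq> b; degree E a = degree E b\<rbrakk> \<Longrightarrow> \<not> path3 E a b"
    and u_in_V: "u \<in> V" and v_in_V: "v \<in> V" and u_ne_v: "u \<noteq> v"
    and degree_u_v: "degree E u = degree E v"
begin

lemma no_edge_between_neighbours:
  assumes "a \<in> V" "b \<in> V" "a \<noteq> b" "degree E a = degree E b"
    and "x \<in> neighbours E a - {b}" "y \<in> neighbours E b - {a}" "x \<noteq> y"
  shows "y \<notin> neighbours E x"
proof
  assume "y \<in> neighbours E x"
  moreover have "distinct [a, x, y, b]"
    using assms not_in_neighbours_self[OF graph] by auto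
  moreover have "{a, x} \<in> E" "{y, b} \<in> E"
    using assms(5,6) by (auto simp: neighbours_def insert_commute)
  ultimately have "path3 E a b"
    unfolding path3_def neighbours_def by blast
  with no_path3 assms(1-4) show False
    by blast
qed

definition nbrs_u :: "'a set" where
  "nbrs_u = neighbours E u - {v}"

definition nbrs_v :: "'a set" where
  "nbrs_v = neighbours E v - {u}"

definition common :: "'a set" where
  "common = nbrs_u \<inter> nbrs_v"

definition exclusive :: "'a set" where
  "exclusive = (nbrs_u \<union> nbrs_v) - common"

definition rest :: "'a set" where
  "rest = V - ({u, v} \<union> nbrs_u \<union> nbrs_v)"

definition rest_nbrs :: "'a \<Rightarrow> 'a set" where
  "rest_nbrs x = rest \<inter> neighbours E x"

lemma nbrs_subset_V: "nbrs_u \<subseteq> V" "nbrs_v \<subseteq> V"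
  using neighbours_subset[OF graph] by (auto simp: nbrs_u_def nbrs_v_def)

lemma finite_V: "finite V"
  using graph by (simp add: simple_graph_def)

lemma finite_parts: "finite nbrs_u" "finite nbrs_v" "finite common" "finite exclusive" "finite rest"
  using nbrs_subset_V finite_V
  by (auto simp: common_def exclusive_def rest_def intro: finite_subset)

lemma u_v_notin_nbrs: "u \<notin> nbrs_u \<union> nbrs_v" "v \<notin> nbrs_u \<union> nbrs_v"
  using not_in_neighbours_self[OF graph] by (auto simp: nbrs_u_def nbrs_v_def)

lemma nbrs_u_nbrs_v_no_edge:
  assumes "x \<in> nbrs_u" "y \<in> nbrs_v" "x \<noteq> y"
  shows "y \<notin> neighbours E x"
  using no_edge_between_neighbours[OF u_in_V v_in_V u_ne_v degree_u_v] assms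
  unfolding nbrs_u_def nbrs_v_def by blast

lemma neighbours_common:
  assumes "x \<in> common"
  shows "neighbours E x = {u, v} \<union> rest_nbrs x"
proof
  show "neighbours E x \<subseteq> {u, v} \<union> rest_nbrs x"
  proof
    fix y assume y: "y \<in> neighbours E x"
    then have "y \<noteq> x" "y \<in> V"
      using not_in_neighbours_self[OF graph] neighbours_subset[OF graph] by auto
    then have "y \<notin> nbrs_u" "y \<notin> nbrs_v"
      using assms y nbrs_u_nbrs_v_no_edge neighbours_sym by (fastforce simp: common_def)+
    with y \<open>y \<in> V\<close> show "y \<in> {u, v} \<union> rest_nbrs x"
      by (auto simp: rest_def rest_nbrs_def)
  qed
  show "{u, v} \<union> rest_nbrs x \<subseteq> neighbours E x"
    using assms by (auto simp: common_def nbrs_u_def nbrs_v_def rest_nbrs_def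
        intro: neighbours_sym[THEN iffD1])
qed

lemma degree_common:
  assumes "x \<in> common"
  shows "degree E x = card (rest_nbrs x) + 2"
proof -
  have "finite (rest_nbrs x)" "u \<notin> rest_nbrs x" "v \<notin> rest_nbrs x"
    using finite_parts by (auto simp: rest_nbrs_def rest_def)
  then show ?thesis
    using neighbours_common[OF assms] u_ne_v by (simp add: degree_eq_card_neighbours[OF graph])
qed

lemma card_rest_nbrs_le: "card (rest_nbrs x) \<le> card rest"
  using finite_parts by (simp add: rest_nbrs_def card_mono)

lemma card_nbrs_u: "card nbrs_u = degree E u - (if {u, v} \<in> E then 1 else 0)"
  using finite_neighbours[OF graph]
  by (simp add: nbrs_u_def degree_eq_card_neighbours[OF graph] neighbours_def card_Diff_singleton_if)

lemma card_nbrs_v: "card nbrs_v = card nbrs_u"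
  using finite_neighbours[OF graph] degree_u_v card_nbrs_u
  by (simp add: nbrs_v_def degree_eq_card_neighbours[OF graph] neighbours_def
      card_Diff_singleton_if insert_commute)

lemma card_V_eq: "card V = card (nbrs_u \<union> nbrs_v) + card rest + 2"
proof -
  have "V = insert u (insert v ((nbrs_u \<union> nbrs_v) \<union> rest))"
    using u_in_V v_in_V nbrs_subset_V by (auto simp: rest_def)
  then have "card V = card (insert u (insert v ((nbrs_u \<union> nbrs_v) \<union> rest)))"
    by (rule arg_cong)
  moreover have "card ((nbrs_u \<union> nbrs_v) \<union> rest) = card (nbrs_u \<union> nbrs_v) + card rest"
    using finite_parts by (intro card_Un_disjoint) (auto simp: rest_def)
  moreover have "u \<notin> nbrs_u \<union> nbrs_v \<union> rest" "v \<notin> nbrs_u \<union> nbrs_v \<union> rest"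
    using u_v_notin_nbrs by (auto simp: rest_def)
  ultimately show ?thesis
    using finite_parts u_ne_v by simp
qed

lemma card_common_eq: "card common + card V = card rest + 2 * card nbrs_u + 2"
  using card_V_eq card_Un_Int[OF finite_parts(1,2)] card_nbrs_v by (simp add: common_def)

lemma card_exclusive: "card exclusive + 2 * card common = 2 * card nbrs_u"
proof -
  have "common \<subseteq> nbrs_u \<union> nbrs_v"
    by (auto simp: common_def)
  then have "card exclusive + card common = card (nbrs_u \<union> nbrs_v)"
    using finite_parts by (simp add: exclusive_def card_Diff_subset card_mono)
  then show ?thesis
    using card_Un_Int[OF finite_parts(1,2)] card_nbrs_v by (simp add: common_def)
qed

lemma common_rest_disjoint: "common \<inter> rest = {}"
  by (auto simp: common_def rest_def)

lemma degree_add_card_neighbours_le: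
  assumes "a \<in> V" "b \<in> V" "a \<noteq> b" "degree E a = degree E b"
    and x: "x \<in> neighbours E a - {b}" "x \<notin> neighbours E b"
  shows "degree E x + card (neighbours E b - {a}) + 2 \<le> card V"
proof -
  let ?X = "insert b (insert x (neighbours E b - {a}))"
  have "neighbours E x \<subseteq> V - ?X"
  proof
    fix y assume y: "y \<in> neighbours E x"
    have "y \<noteq> x" "y \<noteq> b"
      using y x not_in_neighbours_self[OF graph] by (auto simp: neighbours_def insert_commute)
    moreover have "y \<notin> neighbours E b - {a}"
      using no_edge_between_neighbours[OF assms(1-4) x(1)] y \<open>y \<noteq> x\<close> by blast
    ultimately show "y \<in> V - ?X"
      using y neighbours_subset[OF graph] by auto
  qed
  moreover have X_sub: "?X \<subseteq> V"
    using assms neighbours_subset[OF graph] by auto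
  then have "card (V - ?X) = card V - card ?X"
    using finite_V by (meson card_Diff_subset finite_subset)
  moreover have "card ?X \<le> card V"
    using card_mono[OF finite_V X_sub] .
  moreover have "card ?X = card (neighbours E b - {a}) + 2"
    using x not_in_neighbours_self[OF graph] finite_neighbours[OF graph] by auto
  ultimately show ?thesis
    using card_mono[of "V - ?X" "neighbours E x"] finite_V
    by (simp add: degree_eq_card_neighbours[OF graph])
qed

lemma degree_exclusive_le:
  assumes "x \<in> exclusive"
  shows "degree E x + card nbrs_u + 2 \<le> card V"
proof (cases "x \<in> nbrs_u")
  case True
  then have "x \<in> neighbours E u - {v}" "x \<notin> neighbours E v"
    using assms not_in_neighbours_self[OF graph]
    by (auto simp: exclusive_def common_def nbrs_u_def nbrs_v_def)
  from degree_add_card_neighbours_le[OF u_in_V v_in_V u_ne_v degree_u_v this] show ?thesis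
    using card_nbrs_v by (simp add: nbrs_v_def)
next
  case False
  then have "x \<in> neighbours E v - {u}" "x \<notin> neighbours E u"
    using assms not_in_neighbours_self[OF graph]
    by (auto simp: exclusive_def common_def nbrs_u_def nbrs_v_def)
  from degree_add_card_neighbours_le[OF v_in_V u_in_V u_ne_v[symmetric] degree_u_v[symmetric] this]
  show ?thesis
    by (simp add: nbrs_u_def)
qed

lemma degree_rest_le:
  assumes "w \<in> rest"
  shows "degree E w \<le> card exclusive + card (common \<inter> neighbours E w) + card (rest_nbrs w)"
proof -
  have "neighbours E w \<subseteq> exclusive \<union> (common \<inter> neighbours E w) \<union> rest_nbrs w"
  proof
    fix y assume y: "y \<in> neighbours E w"
    have "y \<noteq> u" "y \<noteq> v"
      using assms y by (auto simp: rest_def nbrs_u_def nbrs_v_def neighbours_def insert_commute)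
    with y show "y \<in> exclusive \<union> (common \<inter> neighbours E w) \<union> rest_nbrs w"
      using neighbours_subset[OF graph]
      by (auto simp: exclusive_def common_def rest_def rest_nbrs_def)
  qed
  then have "card (neighbours E w) \<le> card (exclusive \<union> (common \<inter> neighbours E w) \<union> rest_nbrs w)"
    using finite_parts by (intro card_mono) (auto simp: rest_nbrs_def)
  also have "\<dots> \<le> card exclusive + card (common \<inter> neighbours E w) + card (rest_nbrs w)"
    by (meson add_le_mono card_Un_le le_refl order_trans)
  finally show ?thesis
    by (simp add: degree_eq_card_neighbours[OF graph])
qed

lemma sum_degree_split:
  "(\<Sum>x\<in>V. degree E x) = degree E u + degree E v + (\<Sum>x\<in>exclusive. degree E x)
     + (\<Sum>x\<in>common. degree E x) + (\<Sum>x\<in>rest. degree E x)"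
proof -
  have "V = insert u (insert v (exclusive \<union> common \<union> rest))"
    using u_in_V v_in_V nbrs_subset_V by (auto simp: exclusive_def common_def rest_def)
  then have "(\<Sum>x\<in>V. degree E x)
      = (\<Sum>x\<in>insert u (insert v (exclusive \<union> common \<union> rest)). degree E x)"
    by (rule arg_cong)
  moreover have "u \<notin> exclusive \<union> common \<union> rest" "v \<notin> exclusive \<union> common \<union> rest"
    using u_v_notin_nbrs by (auto simp: exclusive_def common_def rest_def)
  moreover have "exclusive \<inter> common = {}" "(exclusive \<union> common) \<inter> rest = {}"
    by (auto simp: exclusive_def common_def rest_def)
  ultimately show ?thesis
    using finite_parts u_ne_v by (simp add: sum.union_disjoint)
qed

lemma sum_card_rest_nbrs_le_pair:
  assumes "x \<in> common" "y \<in> common" "x \<noteq> y"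
    and J: "card (rest_nbrs x) = J" "card (rest_nbrs y) = J"
  shows "(\<Sum>w\<in>rest. card (rest_nbrs w)) \<le> J * (card rest - J) + (card rest - J) * (card rest - 1)"
proof -
  have "degree E x = degree E y"
    using assms by (simp add: degree_common)
  have x_in_V: "x \<in> V" "y \<in> V"
    using assms nbrs_subset_V by (auto simp: common_def)
  have le_x: "card (rest_nbrs w) \<le> card rest - J" if w: "w \<in> rest_nbrs x" for w
  proof -
    have "rest_nbrs w \<subseteq> rest - insert w (rest_nbrs y)"
    proof
      fix z assume z: "z \<in> rest_nbrs w"
      have "w \<noteq> y" "z \<noteq> x" "w \<noteq> z"
        using w z assms common_rest_disjoint not_in_neighbours_self[OF graph]
        by (auto simp: rest_nbrs_def)
      then have "z \<notin> rest_nbrs y"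
        using no_edge_between_neighbours[OF x_in_V \<open>x \<noteq> y\<close> \<open>degree E x = degree E y\<close>] w z
        by (auto simp: rest_nbrs_def neighbours_sym)
      with z \<open>w \<noteq> z\<close> show "z \<in> rest - insert w (rest_nbrs y)"
        by (auto simp: rest_nbrs_def)
    qed
    moreover have "insert w (rest_nbrs y) \<subseteq> rest"
      using w by (auto simp: rest_nbrs_def)
    then have "card (rest - insert w (rest_nbrs y)) = card rest - card (insert w (rest_nbrs y))"
      using finite_parts by (meson card_Diff_subset finite_subset)
    moreover have "J \<le> card (insert w (rest_nbrs y))"
      using J finite_parts by (metis card_insert_le finite_Int rest_nbrs_def)
    ultimately show ?thesis
      using finite_parts card_mono[of "rest - insert w (rest_nbrs y)" "rest_nbrs w"] by simp
  qed
  have le_other: "card (rest_nbrs w) \<le> card rest - 1" if "w \<in> rest" for w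
  proof -
    have "rest_nbrs w \<subseteq> rest - {w}"
      using not_in_neighbours_self[OF graph] by (auto simp: rest_nbrs_def)
    then show ?thesis
      using finite_parts that card_mono[of "rest - {w}" "rest_nbrs w"] by simp
  qed
  have sub: "rest_nbrs x \<subseteq> rest"
    by (simp add: rest_nbrs_def)
  have "(\<Sum>w\<in>rest. card (rest_nbrs w))
      = (\<Sum>w\<in>rest_nbrs x. card (rest_nbrs w)) + (\<Sum>w\<in>rest - rest_nbrs x. card (rest_nbrs w))"
    using sum.subset_diff[OF sub finite_parts(5), of "\<lambda>w. card (rest_nbrs w)"] by linarith
  also have "\<dots> \<le> J * (card rest - J) + card (rest - rest_nbrs x) * (card rest - 1)"
    using sum_bounded_above[of "rest_nbrs x" _ "card rest - J"] le_x
      sum_bounded_above[of "rest - rest_nbrs x" _ "card rest - 1"] le_other J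
    by (intro add_mono) auto
  also have "card (rest - rest_nbrs x) = card rest - J"
    using sub finite_parts J by (simp add: card_Diff_subset finite_subset)
  finally show ?thesis .
qed

lemma sum_card_rest_nbrs_le:
  assumes "card rest + 2 \<le> card common"
  shows "(\<Sum>w\<in>rest. card (rest_nbrs w)) + 2 * (\<Sum>x\<in>common. card (rest_nbrs x))
    \<le> 2 * card common * card rest"
proof -
  obtain J x y where "x \<in> common" "y \<in> common" "x \<noteq> y"
    and J: "card (rest_nbrs x) = J" "card (rest_nbrs y) = J"
    and inj: "inj_on (\<lambda>x. card (rest_nbrs x)) {x \<in> common. J < card (rest_nbrs x)}"
    using card_rest_nbrs_le by (rule obtain_max_repeated_value[OF finite_parts(3) assms])
  have "(\<Sum>w\<in>rest. card (rest_nbrs w)) \<le> J * (card rest - J) + (card rest - J) * (card rest - 1)"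
    using sum_card_rest_nbrs_le_pair[OF \<open>x \<in> common\<close> \<open>y \<in> common\<close> \<open>x \<noteq> y\<close> J] .
  also have "\<dots> \<le> 2 * (\<Sum>x\<in>common. card rest - card (rest_nbrs x))"
    using repeated_values_gap_sum[OF finite_parts(3) _ _ inj] assms card_rest_nbrs_le by simp
  finally have "(\<Sum>w\<in>rest. card (rest_nbrs w))
      \<le> 2 * (\<Sum>x\<in>common. card rest - card (rest_nbrs x))" .
  moreover have "(\<Sum>x\<in>common. card rest - card (rest_nbrs x)) + (\<Sum>x\<in>common. card (rest_nbrs x))
      = card common * card rest"
    using card_rest_nbrs_le by (simp add: sum.distrib[symmetric])
  ultimately show ?thesis
    by (simp add: algebra_simps)
qed

lemma uv_not_edge:
  assumes "card rest + 2 \<le> card common"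
  shows "{u, v} \<notin> E"
proof
  assume "{u, v} \<in> E"
  obtain J x y where xy: "x \<in> common" "y \<in> common" "x \<noteq> y"
    and "card (rest_nbrs x) = J" "card (rest_nbrs y) = J"
    using card_rest_nbrs_le by (rule obtain_max_repeated_value[OF finite_parts(3) assms]) (rule that)
  then have "degree E x = degree E y"
    by (simp add: degree_common)
  moreover have "x \<in> V" "y \<in> V"
    using xy nbrs_subset_V by (auto simp: common_def)
  moreover have "u \<in> neighbours E x - {y}" "v \<in> neighbours E y - {x}"
    using xy u_v_notin_nbrs
    by (auto simp: common_def nbrs_u_def nbrs_v_def neighbours_def insert_commute)
  ultimately have "v \<notin> neighbours E u"
    using no_edge_between_neighbours[of x y u v] xy u_ne_v by simp
  with \<open>{u, v} \<in> E\<close> show False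
    by (simp add: neighbours_def)
qed

lemma twice_card_edges_le:
  assumes "card rest + 2 \<le> card common"
  shows "2 * card E \<le> 2 * card nbrs_u + card exclusive * (card V - (card nbrs_u + 2))
    + card rest * card exclusive + 2 * card common + 2 * card common * card rest"
proof -
  have "degree E u = card nbrs_u" "degree E v = card nbrs_u"
    using uv_not_edge[OF assms] card_nbrs_u degree_u_v by simp_all
  moreover have "(\<Sum>x\<in>exclusive. degree E x) \<le> card exclusive * (card V - (card nbrs_u + 2))"
  proof -
    have "degree E x \<le> card V - (card nbrs_u + 2)" if "x \<in> exclusive" for x
      using degree_exclusive_le[OF that] by linarith
    then show ?thesis
      using sum_bounded_above[of exclusive "degree E" "card V - (card nbrs_u + 2)"] by simp
  qed
  moreover have "(\<Sum>x\<in>common. degree E x) = (\<Sum>x\<in>common. card (rest_nbrs x)) + 2 * card common"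
    using sum.distrib[of "\<lambda>x. card (rest_nbrs x)" "\<lambda>_. 2" common]
    by (simp add: degree_common del: add_2_eq_Suc')
  moreover have "(\<Sum>w\<in>rest. degree E w)
      \<le> card rest * card exclusive + (\<Sum>x\<in>common. card (rest_nbrs x))
        + (\<Sum>w\<in>rest. card (rest_nbrs w))"
  proof -
    have "(\<Sum>w\<in>rest. degree E w)
        \<le> (\<Sum>w\<in>rest. card exclusive + card (common \<inter> neighbours E w) + card (rest_nbrs w))"
      using degree_rest_le by (rule sum_mono)
    moreover have "(\<Sum>w\<in>rest. card (common \<inter> neighbours E w)) = (\<Sum>x\<in>common. card (rest_nbrs x))"
      unfolding rest_nbrs_def
      using sum_card_Int_neighbours_swap[OF graph finite_parts(5,3)] .
    ultimately show ?thesis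
      by (simp add: sum.distrib)
  qed
  ultimately show ?thesis
    using sum_degree_split sum_degree_eq_twice_card_edges[OF graph] sum_card_rest_nbrs_le[OF assms]
    by linarith
qed

text \<open>With t = n + c - card common, the bound of twice_card_edges_le is
  2 (n^2 + n - c^2 + c) - 4 t (c + 1).\<close>

lemma card_edges_le:
  fixes n c :: nat
  assumes "card V = 2 * n + 1" "card nbrs_u = n + c" "1 \<le> c"
  shows "card E + c ^ 2 \<le> n ^ 2 + n + c"
proof -
  have k: "card common = card rest + 2 * c + 1"
    using card_common_eq assms by simp
  have "card common \<le> n + c"
    using card_exclusive assms by linarith
  then obtain t where t: "n + c = card common + t"
    using le_Suc_ex by fastforce
  have "card exclusive = 2 * t"
    using card_exclusive assms t by simp
  moreover have "card V - (card nbrs_u + 2) = t + card rest"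
    using assms t k by simp
  moreover have "card rest + 2 \<le> card common"
    using k assms by simp
  ultimately have "2 * card E \<le> 2 * (n + c) + 2 * t * (t + card rest) + card rest * (2 * t)
      + 2 * card common + 2 * card common * card rest"
    using twice_card_edges_le assms by simp
  then show ?thesis
    using t k by (simp add: power2_eq_square algebra_simps)
qed

end

theorem lemma2p1:
  fixes V :: "'a set" and E :: "'a set set" and n :: nat and u v :: 'a and \<beta> :: nat
  assumes graph: "simple_graph V E"
    and n2: "n \<ge> 2"
    and order: "card V = 2 * n + 1"
    and size: "card E \<ge> n ^ 2 + n"
    and nopath: "\<forall>a\<in>V. \<forall>b\<in>V. a \<noteq> b \<and> degree E a = degree E b \<longrightarrow> \<not> path3 E a b"
    and beta_def: "\<beta> = Max {d. \<exists>x\<in>V. \<exists>y\<in>V. x \<noteq> y \<and> degree E x = d \<and> degree E y = d}"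
    and uv: "u \<in> V" "v \<in> V" "u \<noteq> v" "degree E u = \<beta>" "degree E v = \<beta>"
    and c_pos: "int \<beta> - int n - (if {u, v} \<in> E then 1 else 0) \<ge> 1"
  shows "int (card (compl_edges V E)) \<ge>
    (let c = int \<beta> - int n - (if {u, v} \<in> E then 1 else 0);
         i = (if {u, v} \<in> E then 1 else 0)
     in int n ^ 2 + c ^ 2 - c - i)"
proof -
  interpret equal_degree_pair V E u v
    using graph nopath uv by unfold_locales auto
  define c where "c = \<beta> - n - (if {u, v} \<in> E then 1 else 0)"
  have c: "1 \<le> c" "card nbrs_u = n + c"
    using c_pos card_nbrs_u uv(4) by (auto simp: c_def split: if_splits)
  then have "{u, v} \<notin> E"
    using uv_not_edge card_common_eq order by simp
  have "card E + c ^ 2 \<le> n ^ 2 + n + c"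
    using card_edges_le[OF order c(2,1)] .
  moreover have "card (compl_edges V E) + card E = 2 * n ^ 2 + n"
    using card_compl_edges[OF graph] order by (simp add: choose_two power2_eq_square algebra_simps)
  ultimately have "int (n ^ 2 + c ^ 2) \<le> int (card (compl_edges V E) + c)"
    by linarith
  moreover have "int \<beta> - int n = int c"
    using c_pos \<open>{u, v} \<notin> E\<close> by (simp add: c_def)
  ultimately show ?thesis
    using \<open>{u, v} \<notin> E\<close> by (simp add: Let_def)
qed

end
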